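(* Let $\mu\in(0,1)$, $\sigma>1$ with $\frac{1}{1-\mu}<\sigma$, and let $v_n>0$, $v_m>0$, $\rho>0$. For each nonzero integer $k$ and $\tau>0$ put $\alpha=(\sigma-1)\tau$, \[ Z_k=\frac{\alpha^2\rho^2\left(1-(-1)^k e^{-\alpha\rho\pi}\right)}{\left(k^2+\alpha^2\rho^2\right)\left(1-e^{-\alpha\rho\pi}\right)},\qquad \overline{G}=\left[\frac{\sigma}{2\pi\rho}\cdot\frac{2\left(1-e^{-\alpha\pi\rho}\right)}{\alpha}\right]^{\frac{1}{1-\sigma}}, \] and \[ M_k(\tau)=\frac{\overline{G}^{-\mu}}{\sigma}\begin{bmatrix} v_n\mu\left(\frac{A(Z_k)}{\sigma}-1\right) & v_n\mu\left(\frac{B(Z_k)}{\sigma}+1\right)\\[2mm] v_m A(Z_k) & v_m B(Z_k)\end{bmatrix}, \] where for $Z\in[0,1]$ \[ \delta(Z)=1-\frac{\mu}{\sigma}Z-\frac{\sigma-1}{\sigma}Z^2,\quad A(Z)=\frac{1+\frac{\mu}{\sigma-1}Z-\left(1+\frac{\mu^2}{\sigma-1}\right)Z^2}{\delta(Z)},\quad B(Z)=-\frac{(\mu Z-1)^2}{\delta(Z)}. \] Let $\tau_k^*>0$ denote the critical point for frequency $k$, namely the value such that the maximal real part of the eigenvalues of $M_k(\tau)$ is positive for $\tau\in(0,\tau_k^* )$, zero at $\tau_k^*$, and negative for $\tau>\tau_k^*$. Then $\tau_k^*<\tau_{k+2}^*$ whenever $k>0$, and $\tau_k^*<\tau_{k-2}^*$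 whenever $k<0$.
   Context: $M_k(\tau)$ is the linearization matrix for the $k$-th Fourier modes of perturbations of the firm and worker share functions around the homogeneous stationary state of a core-periphery model on a circle of radius $\rho$ with firm and worker migration; $\mu$ is the manufacturing expenditure share, $\sigma$ the elasticity of substitution, $\tau$ the transport cost parameter, $v_n,v_m$ migration speeds. Under the stated hypotheses such a critical point $\tau_k^*$ exists (and is uniquely determined by the stated sign pattern) for every nonzero integer $k$. *)

theory Defs
  imports "HOL-Analysis.Analysis"
begin

definition cp_alpha :: "real \<Rightarrow> real \<Rightarrow> real" where
  "cp_alpha \<sigma> \<tau> = (\<sigma> - 1) * \<tau>"

definition cp_Z :: "real \<Rightarrow> real \<Rightarrow> int \<Rightarrow> real \<Rightarrow> real" where
  "cp_Z \<sigma> \<rho> k \<tau> =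
     (let \<alpha> = cp_alpha \<sigma> \<tau> in
       \<alpha>\<^sup>2 * \<rho>\<^sup>2 * (1 - ((-1::real) powi k) * exp (- \<alpha> * \<rho> * pi))
       / (((real_of_int k)\<^sup>2 + \<alpha>\<^sup>2 * \<rho>\<^sup>2) * (1 - exp (- \<alpha> * \<rho> * pi))))"

definition cp_Gbar :: "real \<Rightarrow> real \<Rightarrow> real \<Rightarrow> real" where
  "cp_Gbar \<sigma> \<rho> \<tau> =
     (let \<alpha> = cp_alpha \<sigma> \<tau> in
       (\<sigma> / (2 * pi * \<rho>) * (2 * (1 - exp (- \<alpha> * pi * \<rho>)) / \<alpha>)) powr (1 / (1 - \<sigma>)))"

definition cp_delta :: "real \<Rightarrow> real \<Rightarrow> real \<Rightarrow> real" where
  "cp_delta \<mu> \<sigma> Z = 1 - \<mu> / \<sigma> * Z - (\<sigma> - 1) / \<sigma> * Z\<^sup>2"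

definition cp_A :: "real \<Rightarrow> real \<Rightarrow> real \<Rightarrow> real" where
  "cp_A \<mu> \<sigma> Z = (1 + \<mu> / (\<sigma> - 1) * Z - (1 + \<mu>\<^sup>2 / (\<sigma> - 1)) * Z\<^sup>2) / cp_delta \<mu> \<sigma> Z"

definition cp_B :: "real \<Rightarrow> real \<Rightarrow> real \<Rightarrow> real" where
  "cp_B \<mu> \<sigma> Z = - ((\<mu> * Z - 1)\<^sup>2) / cp_delta \<mu> \<sigma> Z"

definition cp_M :: "real \<Rightarrow> real \<Rightarrow> real \<Rightarrow> real \<Rightarrow> real \<Rightarrow> int \<Rightarrow> real \<Rightarrow> real^2^2" where
  "cp_M \<mu> \<sigma> vn vm \<rho> k \<tau> =
     (let Z = cp_Z \<sigma> \<rho> k \<tau>; A = cp_A \<mu> \<sigma> Z; B = cp_B \<mu> \<sigma> Z;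
          c = (cp_Gbar \<sigma> \<rho> \<tau>) powr (- \<mu>) / \<sigma> in
      (\<chi> i j. c * (if i = 1 then (if j = 1 then vn * \<mu> * (A / \<sigma> - 1) else vn * \<mu> * (B / \<sigma> + 1))
                           else (if j = 1 then vm * A else vm * B))))"

definition eigenvalues :: "real^'n^'n \<Rightarrow> complex set" where
  "eigenvalues M = {z. det ((\<chi> i j. complex_of_real (M $ i $ j)) - mat z) = 0}"

definition max_re_eig :: "real^'n^'n \<Rightarrow> real" where
  "max_re_eig M = Max (Re ` eigenvalues M)"

definition is_critical :: "real \<Rightarrow> real \<Rightarrow> real \<Rightarrow> real \<Rightarrow> real \<Rightarrow> int \<Rightarrow> real \<Rightarrow> bool" where
  "is_critical \<mu> \<sigma> vn vm \<rho> k t \<longleftrightarrow> t > 0 \<and>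
     (\<forall>\<tau>. 0 < \<tau> \<and> \<tau> < t \<longrightarrow> max_re_eig (cp_M \<mu> \<sigma> vn vm \<rho> k \<tau>) > 0) \<and>
     max_re_eig (cp_M \<mu> \<sigma> vn vm \<rho> k t) = 0 \<and>
     (\<forall>\<tau>. \<tau> > t \<longrightarrow> max_re_eig (cp_M \<mu> \<sigma> vn vm \<rho> k \<tau>) < 0)"

end

theory Submission
  imports Defs
begin

text \<open>Stability of M_k(tau) depends on tau only through Z = Z_k(tau): M_k(tau) is a positive multiple
  of a matrix N(Z), and a real 2x2 matrix has an eigenvalue with positive real part iff its
  determinant is negative or its trace is positive. Moreover Z_k(tau) is a function of
  x = (sigma - 1) rho tau alone, which for fixed x strictly decreases in |k| within a parity class and
  tends to 0 as x tends to 0. So if tau_k* is critical, the value Z_{k+2}(tau_k*) < Z_k(tau_k*)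
  is attained by Z_k at some tau < tau_k* by the intermediate value theorem; N of it is unstable,
  hence M_{k+2}(tau_k*) is unstable and tau_k* < tau_{k+2}*.\<close>

lemma quadratic_roots_complex:
  fixes t d :: complex
  defines "c \<equiv> csqrt (t\<^sup>2 - 4 * d)"
  shows "{w. w\<^sup>2 - t * w + d = 0} = {(t + c) / 2, (t - c) / 2}"
proof -
  have "c\<^sup>2 = t\<^sup>2 - 4 * d"
    by (simp add: c_def)
  then have "w\<^sup>2 - t * w + d = (w - (t + c) / 2) * (w - (t - c) / 2)" for w
    by (simp add: field_simps power2_eq_square)
  then show ?thesis by auto
qed

lemma eigenvalues_2x2:
  fixes M :: "real^2^2"
  shows "eigenvalues M = {w. w\<^sup>2 - of_real (trace M) * w + of_real (det M) = 0}"
  unfolding eigenvalues_def by (simp add: det_2 trace_def sum_2 mat_def algebra_simps power2_eq_square)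

lemma max_re_eig_2x2:
  fixes M :: "real^2^2"
  shows "max_re_eig M = (trace M + Re (csqrt (of_real ((trace M)\<^sup>2 - 4 * det M)))) / 2"
proof -
  have "eigenvalues M = {w. w\<^sup>2 - of_real (trace M) * w + of_real (det M) = 0}"
    by (rule eigenvalues_2x2)
  also have "\<dots> = {(of_real (trace M) + csqrt (of_real ((trace M)\<^sup>2 - 4 * det M))) / 2,
                      (of_real (trace M) - csqrt (of_real ((trace M)\<^sup>2 - 4 * det M))) / 2}"
    by (subst quadratic_roots_complex) simp
  finally show ?thesis
    unfolding max_re_eig_def using Re_csqrt[of "of_real ((trace M)\<^sup>2 - 4 * det M)"]
    by (simp add: max_def)
qed

lemma max_re_eig_2x2_pos_iff:
  fixes M :: "real^2^2"
  shows "max_re_eig M > 0 \<longleftrightarrow> det M < 0 \<or> trace M > 0"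
proof (cases "(trace M)\<^sup>2 - 4 * det M \<ge> 0")
  case True
  then have "max_re_eig M = (trace M + sqrt ((trace M)\<^sup>2 - 4 * det M)) / 2"
    by (simp add: max_re_eig_2x2)
  moreover have "trace M + sqrt ((trace M)\<^sup>2 - 4 * det M) > 0 \<longleftrightarrow> det M < 0 \<or> trace M > 0"
    using True real_sqrt_less_iff[of "(trace M)\<^sup>2" "(trace M)\<^sup>2 - 4 * det M"]
    by (smt (verit) real_sqrt_abs real_sqrt_ge_zero)
  ultimately show ?thesis
    by (metis half_gt_zero_iff)
next
  case False
  then show ?thesis
    by (simp add: max_re_eig_2x2) (smt (verit) zero_le_power2)
qed

lemma max_re_eig_2x2_scaleR_pos_iff:
  fixes M :: "real^2^2"
  assumes "c > 0"
  shows "max_re_eig (c *\<^sub>R M) > 0 \<longleftrightarrow> max_re_eig M > 0"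
proof -
  have "trace (c *\<^sub>R M) = c * trace M" "det (c *\<^sub>R M) = c\<^sup>2 * det M"
    by (simp_all add: det_2 trace_def sum_2 power2_eq_square algebra_simps)
  then show ?thesis
    using assms by (simp add: max_re_eig_2x2_pos_iff mult_less_0_iff zero_less_mult_iff)
qed

definition cp_Zx :: "int \<Rightarrow> real \<Rightarrow> real" where
  "cp_Zx k x = x\<^sup>2 * (1 - (-1) powi k * exp (- x * pi)) / ((real_of_int k)\<^sup>2 + x\<^sup>2) / (1 - exp (- x * pi))"

lemma cp_Z_eq_cp_Zx: "cp_Z \<sigma> \<rho> k \<tau> = cp_Zx k ((\<sigma> - 1) * \<rho> * \<tau>)"
  by (simp add: cp_Z_def cp_Zx_def cp_alpha_def Let_def power_mult_distrib mult_ac)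

lemma cp_Zx_numerator_pos: "x > 0 \<Longrightarrow> 1 - (-1) powi k * exp (- x * pi) > 0"
  by (auto simp: power_int_minus_left) (smt (verit) exp_gt_zero)

lemma cp_Zx_pos: "x > 0 \<Longrightarrow> cp_Zx k x > 0"
  unfolding cp_Zx_def using cp_Zx_numerator_pos[of x k]
  by (simp add: add_nonneg_pos)

lemma cp_Zx_less:
  assumes "x > 0" "\<bar>k\<bar> < \<bar>j\<bar>" "even (j - k)"
  shows "cp_Zx j x < cp_Zx k x"
proof -
  have "(-1::real) powi j = (-1) powi k"
    using assms(3) by (simp add: power_int_minus_left)
  moreover have "(real_of_int k)\<^sup>2 < (real_of_int j)\<^sup>2"
    using assms(2) abs_le_square_iff[of "real_of_int j" "real_of_int k"] by linarith
  ultimately show ?thesis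
    unfolding cp_Zx_def using assms(1) cp_Zx_numerator_pos[of x k]
    by (simp add: divide_strict_right_mono divide_strict_left_mono add_nonneg_pos)
qed

lemma isCont_cp_Zx: "x > 0 \<Longrightarrow> isCont (cp_Zx k) x"
  unfolding cp_Zx_def[abs_def]
  by (intro continuous_intros) (auto simp: add_nonneg_pos)

lemma cp_Zx_le:
  assumes "x > 0" "k \<noteq> 0"
  shows "cp_Zx k x \<le> 2 * x * (1 + pi * x) / pi"
proof -
  define q where "q = exp (- x * pi)"
  have "q * exp (x * pi) = 1"
    unfolding q_def by (simp flip: exp_add)
  moreover have "1 + pi * x \<le> exp (x * pi)"
    using exp_ge_add_one_self[of "x * pi"] by (simp add: mult.commute)
  ultimately have "q * (1 + pi * x) \<le> 1"
    by (metis exp_gt_zero less_imp_le mult_left_mono q_def)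
  moreover have "0 < 1 + pi * x"
    using assms(1) by (simp add: add_pos_pos)
  ultimately have denom: "pi * x / (1 + pi * x) \<le> 1 - q"
    by (subst pos_divide_le_eq) (simp_all add: algebra_simps)
  have "1 - (-1) powi k * q \<le> 2"
    unfolding q_def using assms(1) by (auto simp: power_int_minus_left) (smt (verit) exp_gt_zero)
  moreover have "1 \<le> (real_of_int k)\<^sup>2 + x\<^sup>2"
    using assms(2) by (metis abs_le_square_iff abs_one int_one_le_iff_zero_less of_int_1_le_iff
        of_int_abs one_power2 zero_less_abs_iff add_increasing2 zero_le_power2)
  ultimately have num: "x\<^sup>2 * (1 - (-1) powi k * q) / ((real_of_int k)\<^sup>2 + x\<^sup>2) \<le> x\<^sup>2 * 2 / 1"
    by (intro frac_le mult_left_mono) auto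
  have "cp_Zx k x = x\<^sup>2 * (1 - (-1) powi k * q) / ((real_of_int k)\<^sup>2 + x\<^sup>2) / (1 - q)"
    unfolding cp_Zx_def q_def ..
  also have "\<dots> \<le> x\<^sup>2 * 2 / 1 / (pi * x / (1 + pi * x))"
    by (rule frac_le) (use num denom assms(1) in \<open>auto simp: add_pos_pos\<close>)
  also have "\<dots> = 2 * x * (1 + pi * x) / pi"
    using assms(1) by (simp add: field_simps power2_eq_square)
  finally show ?thesis .
qed

lemma cp_Zx_tendsto_0:
  assumes "k \<noteq> 0"
  shows "(cp_Zx k \<longlongrightarrow> 0) (at_right 0)"
proof (rule tendsto_sandwich)
  show "\<forall>\<^sub>F x in at_right 0. 0 \<le> cp_Zx k x"
    using eventually_at_right_less by (rule eventually_mono) (simp add: cp_Zx_pos less_imp_le)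
  show "\<forall>\<^sub>F x in at_right 0. cp_Zx k x \<le> 2 * x * (1 + pi * x) / pi"
    using eventually_at_right_less by (rule eventually_mono) (simp add: assms cp_Zx_le)
  show "((\<lambda>x. 2 * x * (1 + pi * x) / pi) \<longlongrightarrow> 0) (at_right 0)"
    by (rule tendsto_eq_intros refl | simp)+
qed simp

lemma cp_Zx_takes_smaller_value:
  assumes "k \<noteq> 0" "x > 0" "0 < z" "z < cp_Zx k x"
  shows "\<exists>y. 0 < y \<and> y < x \<and> cp_Zx k y = z"
proof -
  have "\<forall>\<^sub>F y in at_right 0. cp_Zx k y < z"
    using order_tendstoD(2)[OF cp_Zx_tendsto_0[OF assms(1)] assms(3)] .
  then obtain b where "b > 0" and b: "\<And>y. 0 < y \<Longrightarrow> y < b \<Longrightarrow> cp_Zx k y < z"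
    by (auto simp: eventually_at_right_field)
  define x0 where "x0 = min (b / 2) (x / 2)"
  have x0: "0 < x0" "x0 < x" "cp_Zx k x0 < z"
    using \<open>b > 0\<close> assms(2) b[of x0] by (auto simp: x0_def)
  have "\<forall>y. x0 \<le> y \<and> y \<le> x \<longrightarrow> isCont (cp_Zx k) y"
    using x0(1) by (auto intro: isCont_cp_Zx)
  then obtain y where "x0 \<le> y" "y \<le> x" "cp_Zx k y = z"
    using IVT[of "cp_Zx k" x0 z x] x0 assms(4) by auto
  moreover have "y \<noteq> x"
    using \<open>cp_Zx k y = z\<close> assms(4) by auto
  ultimately show ?thesis
    using x0(1) by (intro exI[of _ y]) auto
qed

definition cp_N :: "real \<Rightarrow> real \<Rightarrow> real \<Rightarrow> real \<Rightarrow> real \<Rightarrow> real^2^2" where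
  "cp_N \<mu> \<sigma> vn vm Z =
     (let A = cp_A \<mu> \<sigma> Z; B = cp_B \<mu> \<sigma> Z in
      (\<chi> i j. if i = 1 then (if j = 1 then vn * \<mu> * (A / \<sigma> - 1) else vn * \<mu> * (B / \<sigma> + 1))
               else (if j = 1 then vm * A else vm * B)))"

lemma cp_M_eq_scaleR_cp_N:
  "cp_M \<mu> \<sigma> vn vm \<rho> k \<tau> = (cp_Gbar \<sigma> \<rho> \<tau> powr (- \<mu>) / \<sigma>) *\<^sub>R cp_N \<mu> \<sigma> vn vm (cp_Z \<sigma> \<rho> k \<tau>)"
  by (simp add: cp_M_def cp_N_def Let_def vec_eq_iff)

lemma cp_Gbar_pos:
  assumes "\<sigma> > 1" "\<rho> > 0" "\<tau> > 0"
  shows "cp_Gbar \<sigma> \<rho> \<tau> > 0"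
proof -
  have "cp_alpha \<sigma> \<tau> > 0"
    using assms by (simp add: cp_alpha_def)
  then have "exp (- cp_alpha \<sigma> \<tau> * pi * \<rho>) < 1"
    using assms(2) by simp
  then show ?thesis
    using \<open>cp_alpha \<sigma> \<tau> > 0\<close> assms by (simp add: cp_Gbar_def Let_def)
qed

lemma cp_M_unstable_iff:
  assumes "\<sigma> > 1" "\<rho> > 0" "\<tau> > 0"
  shows "max_re_eig (cp_M \<mu> \<sigma> vn vm \<rho> k \<tau>) > 0 \<longleftrightarrow> max_re_eig (cp_N \<mu> \<sigma> vn vm (cp_Z \<sigma> \<rho> k \<tau>)) > 0"
  unfolding cp_M_eq_scaleR_cp_N
  using assms cp_Gbar_pos[OF assms] by (simp add: max_re_eig_2x2_scaleR_pos_iff)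

lemma is_critical_unstable_imp_less:
  assumes "is_critical \<mu> \<sigma> vn vm \<rho> k t" "\<tau> > 0" "max_re_eig (cp_M \<mu> \<sigma> vn vm \<rho> k \<tau>) > 0"
  shows "\<tau> < t"
  using assms unfolding is_critical_def by (metis less_asym linorder_neqE_linordered_idom less_irrefl)

lemma is_critical_imp_unstable_higher_freq:
  assumes "\<sigma> > 1" "\<rho> > 0" "k \<noteq> 0" "\<bar>k\<bar> < \<bar>j\<bar>" "even (j - k)"
    and "is_critical \<mu> \<sigma> vn vm \<rho> k t"
  shows "max_re_eig (cp_M \<mu> \<sigma> vn vm \<rho> j t) > 0"
proof -
  define a where "a = (\<sigma> - 1) * \<rho>"
  have "a > 0" "t > 0"
    using assms by (simp_all add: a_def is_critical_def)
  then have "0 < cp_Zx j (a * t)" "cp_Zx j (a * t) < cp_Zx k (a * t)"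
    using cp_Zx_pos cp_Zx_less assms(4,5) by simp_all
  then obtain y where y: "0 < y" "y < a * t" "cp_Zx k y = cp_Zx j (a * t)"
    using cp_Zx_takes_smaller_value[OF assms(3)] \<open>a > 0\<close> \<open>t > 0\<close> by (meson mult_pos_pos)
  define \<tau> where "\<tau> = y / a"
  have "0 < \<tau>" "\<tau> < t"
    using y \<open>a > 0\<close> by (simp_all add: \<tau>_def field_simps)
  then have "max_re_eig (cp_M \<mu> \<sigma> vn vm \<rho> k \<tau>) > 0"
    using assms(6) by (simp add: is_critical_def)
  moreover have "cp_Z \<sigma> \<rho> k \<tau> = cp_Z \<sigma> \<rho> j t"
    using y(3) assms(1,2) by (simp add: cp_Z_eq_cp_Zx \<tau>_def a_def mult.assoc)
  ultimately show ?thesis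
    using cp_M_unstable_iff[OF assms(1,2)] \<open>0 < \<tau>\<close> \<open>t > 0\<close> by metis
qed

lemma is_critical_less_higher_freq:
  assumes "\<sigma> > 1" "\<rho> > 0" "k \<noteq> 0" "\<bar>k\<bar> < \<bar>j\<bar>" "even (j - k)"
    and "is_critical \<mu> \<sigma> vn vm \<rho> k t" "is_critical \<mu> \<sigma> vn vm \<rho> j t'"
  shows "t < t'"
  using is_critical_unstable_imp_less[OF assms(7)] is_critical_imp_unstable_higher_freq[OF assms(1-6)]
    assms(6) by (simp add: is_critical_def)

theorem theorem1:
  fixes \<mu> \<sigma> vn vm \<rho> :: real
  assumes "0 < \<mu>" "\<mu> < 1" "\<sigma> > 1" "1 / (1 - \<mu>) < \<sigma>"
    and "vn > 0" "vm > 0" "\<rho> > 0"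
  shows "(\<forall>(k::int) t t'. k > 0 \<longrightarrow> is_critical \<mu> \<sigma> vn vm \<rho> k t \<longrightarrow>
            is_critical \<mu> \<sigma> vn vm \<rho> (k + 2) t' \<longrightarrow> t < t')
      \<and> (\<forall>(k::int) t t'. k < 0 \<longrightarrow> is_critical \<mu> \<sigma> vn vm \<rho> k t \<longrightarrow>
            is_critical \<mu> \<sigma> vn vm \<rho> (k - 2) t' \<longrightarrow> t < t')"
proof (intro conjI allI impI)
  fix k :: int and t t'
  assume "k > 0" "is_critical \<mu> \<sigma> vn vm \<rho> k t" "is_critical \<mu> \<sigma> vn vm \<rho> (k + 2) t'"
  then show "t < t'"
    by (intro is_critical_less_higher_freq[OF assms(3,7)]) auto
next
  fix k :: int and t t'
  assume "k < 0" "is_critical \<mu> \<sigma> vn vm \<rho> k t" "is_critical \<mu> \<sigma> vn vm \<rho> (k - 2) t'"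
  then show "t < t'"
    by (intro is_critical_less_higher_freq[OF assms(3,7)]) auto
qed

end
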